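(* Let $(X,\mathcal{E})$ be an unbounded discrete ballean that is relatively maximal, and let $p,q$ be distinct ultrafilters from $X^\sharp$. Then $f^\beta(p)\neq q$ for every map $f:X\to X$ such that for every bounded set $B$ of $(X,\mathcal{E})$ both $f(B)$ and $f^{-1}(B)$ are bounded.
   Context: A ballean $(X,\mathcal{E})$ is a set with a coarse structure. $E[x]=\{y:(x,y)\in E\}$. $Y$ is bounded if $Y\subseteq E[x]$ for some $x$ and $E\in\mathcal{E}$. The ballean is discrete if for every $E\in\mathcal{E}$ there is a bounded $B$ with $E[x]=\{x\}$ for all $x\in X\setminus B$. $X^\sharp$ is the set of ultrafilters on $X$ all of whose members are unbounded. For $f:X\to X$, $f^\beta(p)$ denotes the ultrafilter generated by $\{f(P):P\in p\}$. A ballean is relatively maximal if $\mathcal{E}$ is the largest coarse structure on $X$ whose bounded sets are exactly the bounded sets of $(X,\mathcal{E})$. *)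

theory Defs
  imports Main
begin

text \<open>The ambient set X is the whole type 'a. Entourages are subsets of 'a \<times> 'a.\<close>

definition coarse_structure :: "('a \<times> 'a) set set \<Rightarrow> bool" where
  "coarse_structure \<E> \<longleftrightarrow>
     (\<forall>E\<in>\<E>. Id \<subseteq> E) \<and> Id \<in> \<E> \<and>
     (\<forall>E\<in>\<E>. \<forall>F\<in>\<E>. E O F \<in> \<E>) \<and>
     (\<forall>E\<in>\<E>. E\<inverse> \<in> \<E>) \<and>
     (\<forall>E\<in>\<E>. \<forall>F. Id \<subseteq> F \<and> F \<subseteq> E \<longrightarrow> F \<in> \<E>) \<and>
     \<Union>\<E> = UNIV"

definition ball :: "('a \<times> 'a) set \<Rightarrow> 'a \<Rightarrow> 'a set" where
  "ball E x = {y. (x, y) \<in> E}"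

definition bounded_in :: "('a \<times> 'a) set set \<Rightarrow> 'a set \<Rightarrow> bool" where
  "bounded_in \<E> Y \<longleftrightarrow> (\<exists>x. \<exists>E\<in>\<E>. Y \<subseteq> ball E x)"

definition discrete_ballean :: "('a \<times> 'a) set set \<Rightarrow> bool" where
  "discrete_ballean \<E> \<longleftrightarrow>
     (\<forall>E\<in>\<E>. \<exists>B. bounded_in \<E> B \<and> (\<forall>x. x \<notin> B \<longrightarrow> ball E x = {x}))"

definition relatively_maximal :: "('a \<times> 'a) set set \<Rightarrow> bool" where
  "relatively_maximal \<E> \<longleftrightarrow>
     (\<forall>\<E>'. coarse_structure \<E>' \<and> (\<forall>Y. bounded_in \<E>' Y \<longleftrightarrow> bounded_in \<E> Y) \<longrightarrow> \<E>' \<subseteq> \<E>)"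

definition ultrafilter_on :: "'a set set \<Rightarrow> bool" where
  "ultrafilter_on p \<longleftrightarrow>
     {} \<notin> p \<and> UNIV \<in> p \<and>
     (\<forall>A B. A \<in> p \<and> A \<subseteq> B \<longrightarrow> B \<in> p) \<and>
     (\<forall>A\<in>p. \<forall>B\<in>p. A \<inter> B \<in> p) \<and>
     (\<forall>A. A \<in> p \<or> - A \<in> p)"

definition sharp :: "('a \<times> 'a) set set \<Rightarrow> 'a set set set" where
  "sharp \<E> = {p. ultrafilter_on p \<and> (\<forall>P\<in>p. \<not> bounded_in \<E> P)}"

definition beta_ext :: "('a \<Rightarrow> 'b) \<Rightarrow> 'a set set \<Rightarrow> 'b set set" where
  "beta_ext f p = {Q. \<exists>P\<in>p. f ` P \<subseteq> Q}"

end

theory Submission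
  imports Defs
begin

text \<open>The entourages of the largest coarse structure with prescribed bounded sets are exactly
  the reflexive relations E such that E and its converse send bounded sets to bounded sets.
  For f as in the theorem, Id together with the graph of f is such a relation, so relative
  maximality puts it into \<E>. Discreteness then forces f to be the identity outside a bounded
  set B. As p lies in X^sharp, the complement of B belongs to p, whence every member of p
  contains an f-image of a member of p: p \<subseteq> f^beta(p), and an ultrafilter contained in
  another ultrafilter equals it. So f^beta(p) = p \<noteq> q.\<close>

lemma coarse_structureD:
  assumes "coarse_structure \<E>"
  shows "E \<in> \<E> \<Longrightarrow> Id \<subseteq> E" and "Id \<in> \<E>"
    and "E \<in> \<E> \<Longrightarrow> F \<in> \<E> \<Longrightarrow> E O F \<in> \<E>"
    and "E \<in> \<E> \<Longrightarrow> E\<inverse> \<in> \<E>"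
    and "\<exists>H\<in>\<E>. (x, y) \<in> H"
proof -
  obtain Id_le: "\<forall>E\<in>\<E>. Id \<subseteq> E" and Id_in: "Id \<in> \<E>"
    and comp: "\<forall>E\<in>\<E>. \<forall>F\<in>\<E>. E O F \<in> \<E>" and conv: "\<forall>E\<in>\<E>. E\<inverse> \<in> \<E>"
    and cover: "\<Union>\<E> = UNIV"
    using assms unfolding coarse_structure_def by (elim conjE)
  show "E \<in> \<E> \<Longrightarrow> Id \<subseteq> E" "Id \<in> \<E>" "E \<in> \<E> \<Longrightarrow> F \<in> \<E> \<Longrightarrow> E O F \<in> \<E>"
    "E \<in> \<E> \<Longrightarrow> E\<inverse> \<in> \<E>"
    using Id_le Id_in comp conv by blast+
  have "(x, y) \<in> \<Union>\<E>" unfolding cover ..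
  then show "\<exists>H\<in>\<E>. (x, y) \<in> H" by blast
qed

lemma bounded_in_subset: "bounded_in \<E> Y \<Longrightarrow> Z \<subseteq> Y \<Longrightarrow> bounded_in \<E> Z"
  unfolding bounded_in_def by blast

lemma bounded_in_singleton:
  assumes "coarse_structure \<E>"
  shows "bounded_in \<E> {x}"
proof -
  have "{x} \<subseteq> ball Id x" unfolding ball_def by simp
  with coarse_structureD(2)[OF assms] show ?thesis unfolding bounded_in_def by blast
qed

lemma bounded_in_Un:
  assumes c: "coarse_structure \<E>" and "bounded_in \<E> Y" "bounded_in \<E> Z"
  shows "bounded_in \<E> (Y \<union> Z)"
proof -
  obtain x E where E: "E \<in> \<E>" "Y \<subseteq> ball E x" using assms unfolding bounded_in_def by blast
  obtain y F where F: "F \<in> \<E>" "Z \<subseteq> ball F y" using assms unfolding bounded_in_def by blast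
  obtain H where H: "H \<in> \<E>" "(x, y) \<in> H" using coarse_structureD(5)[OF c] by blast
  have "E O H O F \<in> \<E>" using coarse_structureD(3)[OF c] E(1) F(1) H(1) by blast
  moreover have "Id \<subseteq> E" "Id \<subseteq> H" "Id \<subseteq> F" using coarse_structureD(1)[OF c] E F H by blast+
  then have "Y \<union> Z \<subseteq> ball (E O H O F) x"
    using E(2) F(2) H(2) unfolding ball_def by (auto 0 4 simp: subset_iff)
  ultimately show ?thesis unfolding bounded_in_def by blast
qed

lemma bounded_in_Image:
  assumes c: "coarse_structure \<E>" and "E \<in> \<E>" and "bounded_in \<E> Y"
  shows "bounded_in \<E> (E `` Y)"
proof -
  obtain x F where F: "F \<in> \<E>" "Y \<subseteq> ball F x" using assms unfolding bounded_in_def by blast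
  have "F O E \<in> \<E>" using coarse_structureD(3)[OF c F(1) \<open>E \<in> \<E>\<close>] .
  moreover have "E `` Y \<subseteq> ball (F O E) x" using F(2) unfolding ball_def by blast
  ultimately show ?thesis unfolding bounded_in_def by blast
qed

definition max_coarse_structure :: "('a \<times> 'a) set set \<Rightarrow> ('a \<times> 'a) set set" where
  "max_coarse_structure \<E> =
     {E. Id \<subseteq> E \<and> (\<forall>Y. bounded_in \<E> Y \<longrightarrow> bounded_in \<E> (E `` Y) \<and> bounded_in \<E> (E\<inverse> `` Y))}"

lemma coarse_structure_max_coarse_structure:
  assumes c: "coarse_structure \<E>"
  shows "coarse_structure (max_coarse_structure \<E>)"
proof -
  have pair: "Id \<union> {(x, y)} \<in> max_coarse_structure \<E>" for x y
    unfolding max_coarse_structure_def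
  proof (intro CollectI conjI allI impI)
    fix Y assume "bounded_in \<E> Y"
    then have y: "bounded_in \<E> (Y \<union> {y})" and x: "bounded_in \<E> (Y \<union> {x})"
      by (metis bounded_in_Un[OF c] bounded_in_singleton[OF c])+
    show "bounded_in \<E> ((Id \<union> {(x, y)}) `` Y)" by (rule bounded_in_subset[OF y]) auto
    show "bounded_in \<E> ((Id \<union> {(x, y)})\<inverse> `` Y)" by (rule bounded_in_subset[OF x]) auto
  qed auto
  have comp: "E O F \<in> max_coarse_structure \<E>"
    if "E \<in> max_coarse_structure \<E>" "F \<in> max_coarse_structure \<E>" for E F
    using that unfolding max_coarse_structure_def
    by (auto simp: converse_relcomp relcomp_Image)
  have sub: "F \<in> max_coarse_structure \<E>"
    if E: "E \<in> max_coarse_structure \<E>" and "Id \<subseteq> F" "F \<subseteq> E" for E F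
    unfolding max_coarse_structure_def
  proof (intro CollectI conjI allI impI)
    fix Y assume "bounded_in \<E> Y"
    then have "bounded_in \<E> (E `` Y)" "bounded_in \<E> (E\<inverse> `` Y)"
      using E unfolding max_coarse_structure_def by blast+
    moreover have "F `` Y \<subseteq> E `` Y" "F\<inverse> `` Y \<subseteq> E\<inverse> `` Y" using \<open>F \<subseteq> E\<close> by auto
    ultimately show "bounded_in \<E> (F `` Y)" "bounded_in \<E> (F\<inverse> `` Y)"
      by (auto intro: bounded_in_subset)
  qed fact
  have "Id \<in> max_coarse_structure \<E>" unfolding max_coarse_structure_def by auto
  moreover have "Id \<subseteq> E" and "E\<inverse> \<in> max_coarse_structure \<E>"
    if "E \<in> max_coarse_structure \<E>" for E
    using that unfolding max_coarse_structure_def by auto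
  moreover have "\<Union> (max_coarse_structure \<E>) = UNIV" using pair by auto
  ultimately show ?thesis
    unfolding coarse_structure_def using comp sub pair by metis
qed

lemma bounded_in_max_coarse_structure_iff:
  assumes c: "coarse_structure \<E>"
  shows "bounded_in (max_coarse_structure \<E>) Y \<longleftrightarrow> bounded_in \<E> Y"
proof
  assume "bounded_in (max_coarse_structure \<E>) Y"
  then obtain x E where E: "E \<in> max_coarse_structure \<E>" "Y \<subseteq> E `` {x}"
    unfolding bounded_in_def ball_def by auto
  then show "bounded_in \<E> Y"
    using bounded_in_singleton[OF c] bounded_in_subset unfolding max_coarse_structure_def by blast
next
  assume "bounded_in \<E> Y"
  moreover have "\<E> \<subseteq> max_coarse_structure \<E>"
    unfolding max_coarse_structure_def
    using coarse_structureD(1,4)[OF c] bounded_in_Image[OF c] by blast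
  ultimately show "bounded_in (max_coarse_structure \<E>) Y" unfolding bounded_in_def by blast
qed

lemma relatively_maximal_imp_max_coarse_structure_subset:
  assumes "coarse_structure \<E>" and "relatively_maximal \<E>"
  shows "max_coarse_structure \<E> \<subseteq> \<E>"
  using assms coarse_structure_max_coarse_structure bounded_in_max_coarse_structure_iff
  unfolding relatively_maximal_def by blast

lemma graph_in_max_coarse_structure:
  assumes c: "coarse_structure \<E>"
    and f: "\<And>B. bounded_in \<E> B \<Longrightarrow> bounded_in \<E> (f ` B) \<and> bounded_in \<E> (f -` B)"
  shows "Id \<union> {(x, f x) | x. True} \<in> max_coarse_structure \<E>"
proof -
  have "(Id \<union> {(x, f x) | x. True}) `` Y = Y \<union> f ` Y"
    "(Id \<union> {(x, f x) | x. True})\<inverse> `` Y = Y \<union> f -` Y" for Y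
    by auto
  then show ?thesis
    unfolding max_coarse_structure_def using bounded_in_Un[OF c] f by auto
qed

lemma discrete_relatively_maximal_fixes_outside_bounded:
  assumes c: "coarse_structure \<E>" and "discrete_ballean \<E>" and "relatively_maximal \<E>"
    and f: "\<And>B. bounded_in \<E> B \<Longrightarrow> bounded_in \<E> (f ` B) \<and> bounded_in \<E> (f -` B)"
  obtains B where "bounded_in \<E> B" and "\<And>x. x \<notin> B \<Longrightarrow> f x = x"
proof -
  let ?G = "Id \<union> {(x, f x) | x. True}"
  have "?G \<in> \<E>"
    using graph_in_max_coarse_structure[OF c f]
      relatively_maximal_imp_max_coarse_structure_subset[OF c \<open>relatively_maximal \<E>\<close>] by blast
  then obtain B where "bounded_in \<E> B" "\<And>x. x \<notin> B \<Longrightarrow> ball ?G x = {x}"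
    using \<open>discrete_ballean \<E>\<close> unfolding discrete_ballean_def by blast
  moreover have "f x \<in> ball ?G x" for x unfolding ball_def by auto
  ultimately show thesis using that by blast
qed

lemma ultrafilter_onD:
  assumes "ultrafilter_on p"
  shows "{} \<notin> p" and "A \<in> p \<Longrightarrow> B \<in> p \<Longrightarrow> A \<inter> B \<in> p" and "A \<notin> p \<Longrightarrow> - A \<in> p"
proof -
  obtain "{} \<notin> p" and "\<forall>A\<in>p. \<forall>B\<in>p. A \<inter> B \<in> p" and "\<forall>A. A \<in> p \<or> - A \<in> p"
    using assms unfolding ultrafilter_on_def by (elim conjE)
  then show "{} \<notin> p" "A \<in> p \<Longrightarrow> B \<in> p \<Longrightarrow> A \<inter> B \<in> p" "A \<notin> p \<Longrightarrow> - A \<in> p"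
    by blast+
qed

lemma ultrafilter_on_subset_imp_eq:
  assumes p: "ultrafilter_on p" and q: "ultrafilter_on q" and "p \<subseteq> q"
  shows "p = q"
proof -
  have "A \<in> p" if "A \<in> q" for A
  proof (rule ccontr)
    assume "A \<notin> p"
    then have "- A \<in> q" using ultrafilter_onD(3)[OF p] \<open>p \<subseteq> q\<close> by blast
    then have "A \<inter> - A \<in> q" using ultrafilter_onD(2)[OF q] \<open>A \<in> q\<close> by blast
    then show False using ultrafilter_onD(1)[OF q] by simp
  qed
  then show ?thesis using \<open>p \<subseteq> q\<close> by blast
qed

lemma ultrafilter_on_subset_beta_ext:
  assumes "ultrafilter_on p" and "A \<in> p" and "\<And>x. x \<in> A \<Longrightarrow> f x = x"
  shows "p \<subseteq> beta_ext f p"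
proof
  fix P assume "P \<in> p"
  then have "P \<inter> A \<in> p" using ultrafilter_onD(2)[OF assms(1)] assms(2) by blast
  moreover have "f ` (P \<inter> A) \<subseteq> P" using assms(3) by auto
  ultimately show "P \<in> beta_ext f p" unfolding beta_ext_def by blast
qed

theorem proposition3:
  fixes \<E> :: "('a \<times> 'a) set set"
  assumes "coarse_structure \<E>"
    and "\<not> bounded_in \<E> (UNIV :: 'a set)"
    and "discrete_ballean \<E>"
    and "relatively_maximal \<E>"
    and "p \<in> sharp \<E>" and "q \<in> sharp \<E>" and "p \<noteq> q"
  shows "\<forall>f :: 'a \<Rightarrow> 'a.
           (\<forall>B. bounded_in \<E> B \<longrightarrow> bounded_in \<E> (f ` B) \<and> bounded_in \<E> (f -` B))
           \<longrightarrow> beta_ext f p \<noteq> q"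
proof (intro allI impI)
  fix f :: "'a \<Rightarrow> 'a"
  assume "\<forall>B. bounded_in \<E> B \<longrightarrow> bounded_in \<E> (f ` B) \<and> bounded_in \<E> (f -` B)"
  then obtain B where B: "bounded_in \<E> B" "\<And>x. x \<notin> B \<Longrightarrow> f x = x"
    using discrete_relatively_maximal_fixes_outside_bounded assms(1,3,4) by metis
  have uf: "ultrafilter_on p" "ultrafilter_on q" using assms(5,6) unfolding sharp_def by auto
  have "- B \<in> p" using assms(5) B(1) ultrafilter_onD(3)[OF uf(1)] unfolding sharp_def by blast
  then have "p \<subseteq> beta_ext f p" using ultrafilter_on_subset_beta_ext[OF uf(1)] B(2) by blast
  then show "beta_ext f p \<noteq> q" using ultrafilter_on_subset_imp_eq[OF uf] assms(7) by blast
qed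

end
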